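(* Let $n\ge 2$, let $\tau$ be any permutation of $\{1,\dots,n\}$, let $G_n$ be the graph built from $\tau$ as in the context, and let $m$ be the vertex with $\tau(m)=1$. The greedy walk from $1$ to target $n$ in $G_n$ visits exactly: first all left-to-right minima positions of $\tau$ in increasing order from $1$ to $m$, then all right-to-left minima positions of $\tau$ strictly greater than $m$ in increasing order up to $n$. Consequently the number of steps $S_n$ of this walk satisfies \[ S_n = L_n(\tau)+R_n(\tau)-2 . \]
   Context: Vertices $V=\{1,\dots,n\}\subset\mathbb{Z}$. A permutation $\tau$ of $V$ gives insertion times: vertex $x$ is inserted at time $\tau(x)$. The undirected graph $G_n$ on $V$ is built as follows: start with no edges; for $t=1,\dots,n$, let $x$ be the vertex with $\tau(x)=t$; if some $y<x$ with $\tau(y)<t$ exists, add an edge between $x$ and the largest such $y$; if some $y>x$ with $\tau(y)<t$ exists, add an edge between $x$ and the smallest such $y$. The greedy walk toward target $n$ starts at $x_0=1$ and, from the current vertex $x\ne n$, moves to the neighbor $y$ of $x$ in $G_n$ minimizing $|y-n|$; it stops upon reaching $n$; $S_n$ is its number of moves. For a permutation $\sigma$ of $\{1,\dots,n\}$, position $i$ is a left-to-right minimum if $\sigma(i)<\min\{\sigma(1),\dots,\sigma(i-1)\}$ ($i=1$ always is), and a right-to-left minimum if $\sigma(i)<\min\{\sigma(i+1),\dots,\sigma(n)\}$ ($i=n$ always is); $L_n(\sigma)$ and $R_n(\sigma)$ are the numbers of left-to-right and right-to-left minima. *)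

theory Defs
  imports Main "HOL-Combinatorics.Permutations"
begin

text \<open>Vertices are 1..n (as nat). tau x is the insertion time of vertex x.\<close>

definition earlier_left :: "(nat \<Rightarrow> nat) \<Rightarrow> nat \<Rightarrow> nat \<Rightarrow> nat set" where
  "earlier_left tau n x = {y \<in> {1..n}. y < x \<and> tau y < tau x}"

definition earlier_right :: "(nat \<Rightarrow> nat) \<Rightarrow> nat \<Rightarrow> nat \<Rightarrow> nat set" where
  "earlier_right tau n x = {y \<in> {1..n}. x < y \<and> tau y < tau x}"

definition ins_link :: "(nat \<Rightarrow> nat) \<Rightarrow> nat \<Rightarrow> nat \<Rightarrow> nat \<Rightarrow> bool" where
  "ins_link tau n x y \<longleftrightarrow>
     (earlier_left tau n x \<noteq> {} \<and> y = Max (earlier_left tau n x)) \<or>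
     (earlier_right tau n x \<noteq> {} \<and> y = Min (earlier_right tau n x))"

definition gn_edge :: "(nat \<Rightarrow> nat) \<Rightarrow> nat \<Rightarrow> nat \<Rightarrow> nat \<Rightarrow> bool" where
  "gn_edge tau n x y \<longleftrightarrow> x \<in> {1..n} \<and> y \<in> {1..n} \<and>
     (ins_link tau n x y \<or> ins_link tau n y x)"

definition greedy_step :: "(nat \<Rightarrow> nat) \<Rightarrow> nat \<Rightarrow> nat \<Rightarrow> nat" where
  "greedy_step tau n x =
     (if x = n then n else ARG_MIN (\<lambda>y. \<bar>int y - int n\<bar>) y. gn_edge tau n x y)"

definition greedy_walk :: "(nat \<Rightarrow> nat) \<Rightarrow> nat \<Rightarrow> nat \<Rightarrow> nat" where
  "greedy_walk tau n k = (greedy_step tau n ^^ k) 1"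

definition greedy_steps :: "(nat \<Rightarrow> nat) \<Rightarrow> nat \<Rightarrow> nat" where
  "greedy_steps tau n = (LEAST k. greedy_walk tau n k = n)"

definition lr_min_pos :: "(nat \<Rightarrow> nat) \<Rightarrow> nat \<Rightarrow> nat set" where
  "lr_min_pos sigma n = {i \<in> {1..n}. \<forall>j \<in> {1..<i}. sigma i < sigma j}"

definition rl_min_pos :: "(nat \<Rightarrow> nat) \<Rightarrow> nat \<Rightarrow> nat set" where
  "rl_min_pos sigma n = {i \<in> {1..n}. \<forall>j \<in> {i<..n}. sigma i < sigma j}"

definition L_num :: "(nat \<Rightarrow> nat) \<Rightarrow> nat \<Rightarrow> nat" where
  "L_num sigma n = card (lr_min_pos sigma n)"

definition R_num :: "(nat \<Rightarrow> nat) \<Rightarrow> nat \<Rightarrow> nat" where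
  "R_num sigma n = card (rl_min_pos sigma n)"

end

theory Submission
  imports Defs
begin

text \<open>Vertices x < y of G_n are adjacent iff every vertex strictly between them is inserted
  after both. All neighbours lie in {1..n}, so a greedy step from x goes to the largest
  neighbour of x. If x < m is a left-to-right minimum, this is the first position after x with
  a smaller insertion time, i.e. the next left-to-right minimum; if m \<le> x < n is a
  right-to-left minimum, it is the position of the earliest insertion time in (x, n], i.e. the
  next right-to-left minimum. So the walk runs through the left-to-right and right-to-left
  minima in increasing order from 1 to n, and since the two kinds of minima share only m, it
  makes L_n + R_n - 2 moves.\<close>

lemma ins_link_upward_iff:
  assumes "inj_on tau {1..n}" "x \<in> {1..n}" "y \<in> {1..n}" "x < y"
  shows "ins_link tau n x y \<longleftrightarrow> tau y < tau x \<and> (\<forall>w\<in>{x<..<y}. tau x < tau w)"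
proof -
  have fin: "finite (earlier_left tau n x)" "finite (earlier_right tau n x)"
    unfolding earlier_left_def earlier_right_def by auto
  have "\<not> (earlier_left tau n x \<noteq> {} \<and> y = Max (earlier_left tau n x))"
    using Max_in[OF fin(1)] assms(4) unfolding earlier_left_def by fastforce
  then have "ins_link tau n x y \<longleftrightarrow>
      y \<in> earlier_right tau n x \<and> (\<forall>w\<in>earlier_right tau n x. y \<le> w)"
    unfolding ins_link_def using Min_eq_iff[OF fin(2)] by (metis empty_iff)
  also have "\<dots> \<longleftrightarrow> tau y < tau x \<and> (\<forall>w\<in>{x<..<y}. tau x < tau w)"
  proof -
    have between: "w \<in> earlier_right tau n x \<longleftrightarrow> tau w < tau x" if "w \<in> {x<..<y}" for w
      using that assms(2,3) unfolding earlier_right_def by auto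
    have "tau w \<noteq> tau x" if "w \<in> {x<..<y}" for w
      using that assms(2,3) inj_on_eq_iff[OF assms(1)] by fastforce
    then have "(\<forall>w\<in>{x<..<y}. w \<notin> earlier_right tau n x) \<longleftrightarrow> (\<forall>w\<in>{x<..<y}. tau x < tau w)"
      using between by (meson linorder_neqE_nat order.asym)
    moreover have "earlier_right tau n x \<subseteq> {x<..}"
      unfolding earlier_right_def by auto
    then have "(\<forall>w\<in>earlier_right tau n x. y \<le> w) \<longleftrightarrow> (\<forall>w\<in>{x<..<y}. w \<notin> earlier_right tau n x)"
      by (meson greaterThanLessThan_iff greaterThan_iff not_le subsetD)
    moreover have "y \<in> earlier_right tau n x \<longleftrightarrow> tau y < tau x"
      using assms(3,4) unfolding earlier_right_def by simp
    ultimately show ?thesis by blast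
  qed
  finally show ?thesis .
qed

lemma ins_link_downward_iff:
  assumes "inj_on tau {1..n}" "x \<in> {1..n}" "y \<in> {1..n}" "y < x"
  shows "ins_link tau n x y \<longleftrightarrow> tau y < tau x \<and> (\<forall>w\<in>{y<..<x}. tau x < tau w)"
proof -
  have fin: "finite (earlier_left tau n x)" "finite (earlier_right tau n x)"
    unfolding earlier_left_def earlier_right_def by auto
  have "earlier_right tau n x \<subseteq> {x<..}"
    unfolding earlier_right_def by auto
  then have "\<not> (earlier_right tau n x \<noteq> {} \<and> y = Min (earlier_right tau n x))"
    using Min_in[OF fin(2)] assms(4) by fastforce
  then have "ins_link tau n x y \<longleftrightarrow>
      y \<in> earlier_left tau n x \<and> (\<forall>w\<in>earlier_left tau n x. w \<le> y)"
    unfolding ins_link_def using Max_eq_iff[OF fin(1)] by (metis empty_iff)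
  also have "\<dots> \<longleftrightarrow> tau y < tau x \<and> (\<forall>w\<in>{y<..<x}. tau x < tau w)"
  proof -
    have between: "w \<in> earlier_left tau n x \<longleftrightarrow> tau w < tau x" if "w \<in> {y<..<x}" for w
      using that assms(2,3) unfolding earlier_left_def by auto
    have "tau w \<noteq> tau x" if "w \<in> {y<..<x}" for w
      using that assms(2,3) inj_on_eq_iff[OF assms(1)] by fastforce
    then have "(\<forall>w\<in>{y<..<x}. w \<notin> earlier_left tau n x) \<longleftrightarrow> (\<forall>w\<in>{y<..<x}. tau x < tau w)"
      using between by (meson linorder_neqE_nat order.asym)
    moreover have "earlier_left tau n x \<subseteq> {..<x}"
      unfolding earlier_left_def by auto
    then have "(\<forall>w\<in>earlier_left tau n x. w \<le> y) \<longleftrightarrow> (\<forall>w\<in>{y<..<x}. w \<notin> earlier_left tau n x)"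
      by (meson greaterThanLessThan_iff lessThan_iff not_le subsetD)
    moreover have "y \<in> earlier_left tau n x \<longleftrightarrow> tau y < tau x"
      using assms(3,4) unfolding earlier_left_def by simp
    ultimately show ?thesis by blast
  qed
  finally show ?thesis .
qed

lemma gn_edge_iff:
  assumes "inj_on tau {1..n}" "x \<in> {1..n}" "y \<in> {1..n}" "x < y"
  shows "gn_edge tau n x y \<longleftrightarrow> (\<forall>w\<in>{x<..<y}. max (tau x) (tau y) < tau w)"
proof -
  have "tau x \<noteq> tau y"
    using assms inj_on_eq_iff[OF assms(1)] by fastforce
  then show ?thesis
    using assms ins_link_upward_iff[OF assms] ins_link_downward_iff[of tau n y x]
    unfolding gn_edge_def by (auto simp: max_def)
qed

lemma greedy_step_eq_max_neighbour:
  assumes "x \<noteq> n" "gn_edge tau n x y" "\<And>z. gn_edge tau n x z \<Longrightarrow> z \<le> y"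
  shows "greedy_step tau n x = y"
proof -
  have "inj_on (\<lambda>z. \<bar>int z - int n\<bar>) {z. gn_edge tau n x z}"
    unfolding gn_edge_def by (auto intro!: inj_onI)
  moreover have "\<bar>int y - int n\<bar> \<le> \<bar>int z - int n\<bar>" if "gn_edge tau n x z" for z
    using that assms(2) assms(3)[OF that] unfolding gn_edge_def by auto
  ultimately have "arg_min (\<lambda>z. \<bar>int z - int n\<bar>) (gn_edge tau n x) = y"
    using assms(2) by (intro arg_min_inj_eq) auto
  then show ?thesis
    unfolding greedy_step_def using assms(1) by simp
qed

lemma greedy_step_eqI:
  assumes "inj_on tau {1..n}" "x \<in> {1..n}" "y \<in> {1..n}" "x < y"
    and "\<forall>w\<in>{x<..<y}. max (tau x) (tau y) < tau w"
    and "\<forall>z\<in>{y<..n}. tau y < max (tau x) (tau z)"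
  shows "greedy_step tau n x = y"
proof (rule greedy_step_eq_max_neighbour)
  show "x \<noteq> n" using assms(3,4) by simp
  show "gn_edge tau n x y" using gn_edge_iff assms(1-5) by blast
  fix z assume z: "gn_edge tau n x z"
  show "z \<le> y"
  proof (rule ccontr)
    assume "\<not> z \<le> y"
    then have "z \<in> {y<..n}" "y \<in> {x<..<z}" "z \<in> {1..n}"
      using z assms(4) unfolding gn_edge_def by auto
    moreover have "\<forall>w\<in>{x<..<z}. max (tau x) (tau z) < tau w"
      using z gn_edge_iff[OF assms(1,2)] calculation by auto
    ultimately show False
      using assms(6) by fastforce
  qed
qed

lemma sorted_list_of_set_Un_if_less:
  fixes A B :: "'a::linorder set"
  assumes "finite A" "finite B" "\<And>a b. a \<in> A \<Longrightarrow> b \<in> B \<Longrightarrow> a < b"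
  shows "sorted_list_of_set (A \<union> B) = sorted_list_of_set A @ sorted_list_of_set B"
proof -
  have "sorted_wrt (<) (sorted_list_of_set A @ sorted_list_of_set B)"
    using assms by (simp add: sorted_wrt_append)
  then have "sorted_list_of_set (set (sorted_list_of_set A @ sorted_list_of_set B)) =
      sorted_list_of_set A @ sorted_list_of_set B"
    by (metis strict_sorted_iff sorted_list_of_set.idem_if_sorted_distinct)
  then show ?thesis
    using assms(1,2) by simp
qed

lemma funpow_Min_eq_nth_sorted_list_of_set:
  fixes A :: "'a::linorder set"
  assumes "finite A" and "\<And>x. x \<in> A \<Longrightarrow> x \<noteq> Max A \<Longrightarrow> f x = Min {y \<in> A. x < y}"
    and "k < card A"
  shows "(f ^^ k) (Min A) = sorted_list_of_set A ! k"
  using assms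
proof (induction k arbitrary: A)
  case 0
  then show ?case
    by (subst sorted_list_of_set_nonempty) (auto simp: card_gt_0_iff)
next
  case (Suc k)
  define A' where "A' = A - {Min A}"
  have ne: "A \<noteq> {}"
    using Suc.prems(3) by auto
  then have card': "k < card A'"
    using Suc.prems(1,3) by (simp add: A'_def Min_in card_Diff_singleton)
  then have "A' \<noteq> {}"
    by auto
  have min_le: "Min A \<le> x" and le_max: "x \<le> Max A" if "x \<in> A" for x
    using that Suc.prems(1) by simp_all
  have upper: "{y \<in> A. x < y} = {y \<in> A'. x < y}" if "x \<in> A'" for x
    using that by (auto simp: A'_def dest: min_le)
  have "Min A \<noteq> Max A"
    using \<open>A' \<noteq> {}\<close> min_le le_max by (force simp: A'_def)
  then have "Max A \<in> A'"
    using Suc.prems(1) ne by (simp add: A'_def)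
  then have "Max A' = Max A"
    using Suc.prems(1) le_max by (intro Max_eqI) (auto simp: A'_def)
  then have step': "f x = Min {y \<in> A'. x < y}" if "x \<in> A'" "x \<noteq> Max A'" for x
    using Suc.prems(2) that upper by (auto simp: A'_def)
  have "{y \<in> A. Min A < y} = A'"
    using min_le by (auto simp: A'_def less_le)
  then have "f (Min A) = Min A'"
    using Suc.prems(1,2) ne \<open>Min A \<noteq> Max A\<close> by simp
  then have "(f ^^ Suc k) (Min A) = (f ^^ k) (Min A')"
    by (simp only: funpow_Suc_right comp_apply)
  also have "\<dots> = sorted_list_of_set A' ! k"
    using Suc.IH[OF _ step' card'] Suc.prems(1) by (simp add: A'_def)
  also have "\<dots> = sorted_list_of_set A ! Suc k"
    using Suc.prems(1) ne by (simp add: A'_def sorted_list_of_set_nonempty)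
  finally show ?case .
qed

lemma sorted_list_of_set_nth_card_minus_one:
  fixes A :: "'a::linorder set"
  assumes "finite A" "A \<noteq> {}"
  shows "sorted_list_of_set A ! (card A - 1) = Max A"
proof -
  let ?xs = "sorted_list_of_set A"
  have "Max A = ?xs ! (card A - 1)"
  proof (rule Max_eqI[OF assms(1)])
    show "?xs ! (card A - 1) \<in> A"
      using assms by (metis card_gt_0_iff diff_less length_sorted_list_of_set nth_mem
          set_sorted_list_of_set zero_less_one)
    fix y assume "y \<in> A"
    then obtain i where "i < card A" "y = ?xs ! i"
      using assms(1) by (metis in_set_conv_nth length_sorted_list_of_set set_sorted_list_of_set)
    then show "y \<le> ?xs ! (card A - 1)"
      using sorted_nth_mono[OF sorted_sorted_list_of_set, of i "card A - 1" A] assms(1) by simp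
  qed
  then show ?thesis ..
qed

lemma lr_min_pos_first_smaller:
  assumes x: "x \<in> lr_min_pos tau n" and r: "x < r" "r \<le> n" "tau r < tau x"
    and between: "\<forall>w\<in>{x<..<r}. tau x < tau w"
  shows "r \<in> lr_min_pos tau n"
  unfolding lr_min_pos_def
proof (intro CollectI conjI ballI)
  show "r \<in> {1..n}"
    using x r unfolding lr_min_pos_def by auto
  fix j
  assume "j \<in> {1..<r}"
  then have "j = x \<or> tau x < tau j"
    using x between unfolding lr_min_pos_def by (cases j x rule: linorder_cases) auto
  then show "tau r < tau j"
    using r(3) by auto
qed

locale strict_min_position =
  fixes n m :: nat and tau :: "nat \<Rightarrow> nat"
  assumes inj: "inj_on tau {1..n}"
    and m_in: "m \<in> {1..n}"
    and min_at_m: "\<And>x. x \<in> {1..n} \<Longrightarrow> x \<noteq> m \<Longrightarrow> tau m < tau x"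
begin

definition records :: "nat set" where
  "records = lr_min_pos tau n \<union> rl_min_pos tau n"

lemma lr_min_pos_le:
  assumes "x \<in> lr_min_pos tau n"
  shows "x \<le> m"
proof (rule ccontr)
  assume "\<not> x \<le> m"
  then have "tau x < tau m" "tau m < tau x"
    using assms m_in min_at_m[of x] unfolding lr_min_pos_def by auto
  then show False by simp
qed

lemma rl_min_pos_ge:
  assumes "x \<in> rl_min_pos tau n"
  shows "m \<le> x"
proof (rule ccontr)
  assume "\<not> m \<le> x"
  then have "tau x < tau m" "tau m < tau x"
    using assms m_in min_at_m[of x] unfolding rl_min_pos_def by auto
  then show False by simp
qed

lemma lr_min_pos_Int_rl_min_pos: "lr_min_pos tau n \<inter> rl_min_pos tau n = {m}"
proof -
  have "m \<in> lr_min_pos tau n" "m \<in> rl_min_pos tau n"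
    using m_in min_at_m unfolding lr_min_pos_def rl_min_pos_def by auto
  then show ?thesis
    using lr_min_pos_le rl_min_pos_ge by fastforce
qed

lemma records_subset: "records \<subseteq> {1..n}"
  unfolding records_def lr_min_pos_def rl_min_pos_def by auto

lemma one_in_records: "1 \<in> records"
  using m_in unfolding records_def lr_min_pos_def by auto

lemma n_in_records: "n \<in> records"
  using m_in unfolding records_def rl_min_pos_def by auto

lemma finite_records: "finite records"
  using records_subset finite_subset by blast

lemma Min_records: "Min records = 1"
  using finite_records one_in_records records_subset by (intro Min_eqI) auto

lemma Max_records: "Max records = n"
  using finite_records n_in_records records_subset by (intro Max_eqI) auto

lemma card_records: "card records + 1 = L_num tau n + R_num tau n"
  using card_Un_Int[of "lr_min_pos tau n" "rl_min_pos tau n"] finite_records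
  unfolding records_def L_num_def R_num_def lr_min_pos_Int_rl_min_pos by simp

lemma greedy_step_lr_min_pos:
  assumes x: "x \<in> lr_min_pos tau n" "x \<noteq> m"
  shows "greedy_step tau n x = Min {t \<in> records. x < t}"
proof -
  have x_in: "x \<in> {1..n}" and "x < m"
    using x lr_min_pos_le[of x] unfolding lr_min_pos_def by auto
  define r where "r = (LEAST r. x < r \<and> tau r < tau x)"
  have m_cand: "x < m \<and> tau m < tau x"
    using \<open>x < m\<close> min_at_m[OF x_in x(2)] by simp
  then have r: "x < r" "tau r < tau x"
    using LeastI[of "\<lambda>r. x < r \<and> tau r < tau x" m] m_cand unfolding r_def by auto
  have "r \<le> m"
    unfolding r_def using m_cand by (rule Least_le)
  then have r_in: "r \<in> {1..n}"
    using x_in m_in r(1) by auto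
  have between: "tau x < tau w" if "w \<in> {x<..<r}" for w
  proof -
    have "\<not> (x < w \<and> tau w < tau x)"
      using that not_less_Least[of w "\<lambda>r. x < r \<and> tau r < tau x"] unfolding r_def by auto
    moreover have "tau w \<noteq> tau x"
      using that x_in r_in inj_on_eq_iff[OF inj, of w x] by auto
    ultimately show ?thesis
      using that by auto
  qed
  have "greedy_step tau n x = r"
    using r between by (intro greedy_step_eqI[OF inj x_in r_in]) auto
  moreover have "r \<in> lr_min_pos tau n"
    using lr_min_pos_first_smaller[OF x(1) r(1) _ r(2)] r_in between by simp
  moreover have "r \<le> t" if "t \<in> records" "x < t" for t
  proof (rule ccontr)
    assume "\<not> r \<le> t"
    then have "t \<in> {x<..<r}"
      using that by simp
    moreover have "t \<notin> rl_min_pos tau n"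
      using rl_min_pos_ge[of t] \<open>r \<le> m\<close> \<open>\<not> r \<le> t\<close> by auto
    ultimately have "t \<in> lr_min_pos tau n"
      using that(1) unfolding records_def by auto
    then have "tau t < tau x"
      using x_in \<open>x < t\<close> unfolding lr_min_pos_def by auto
    then show False
      using between[of t] \<open>t \<in> {x<..<r}\<close> by simp
  qed
  ultimately show ?thesis
    using r(1) finite_records by (intro Min_eqI[symmetric]) (auto simp: records_def)
qed

lemma greedy_step_rl_min_pos:
  assumes x: "x \<in> rl_min_pos tau n" "x \<noteq> n"
  shows "greedy_step tau n x = Min {t \<in> records. x < t}"
proof -
  have x_in: "x \<in> {1..n}" and "m \<le> x"
    using x rl_min_pos_ge[of x] unfolding rl_min_pos_def by auto
  define s where "s = (ARG_MIN tau s. s \<in> {x<..n})"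
  have "x < n"
    using x_in x(2) by simp
  then have s: "s \<in> {x<..n}" "\<And>y. y \<in> {x<..n} \<Longrightarrow> tau s \<le> tau y"
    unfolding s_def using arg_min_nat_lemma[of "\<lambda>s. s \<in> {x<..n}" n tau] by auto
  then have s_in: "s \<in> {1..n}"
    using x_in by auto
  have s_min: "tau s < tau y" if "y \<in> {x<..n}" "y \<noteq> s" for y
    using s(2)[OF that(1)] that x_in s_in inj_on_eq_iff[OF inj, of y s] by fastforce
  have "tau x < tau s"
    using x(1) s(1) unfolding rl_min_pos_def by auto
  then have "\<forall>w\<in>{x<..<s}. max (tau x) (tau s) < tau w"
    using s(1) s_min by auto
  moreover have "\<forall>z\<in>{s<..n}. tau s < max (tau x) (tau z)"
    using s(1) s_min by (auto simp: less_max_iff_disj)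
  ultimately have "greedy_step tau n x = s"
    using s(1) by (intro greedy_step_eqI[OF inj x_in s_in]) auto
  moreover have "s \<in> rl_min_pos tau n"
    using s_in s(1) s_min unfolding rl_min_pos_def by auto
  moreover have "s \<le> t" if "t \<in> records" "x < t" for t
  proof (rule ccontr)
    assume "\<not> s \<le> t"
    have "t \<notin> lr_min_pos tau n"
      using lr_min_pos_le[of t] \<open>m \<le> x\<close> \<open>x < t\<close> by auto
    then have "tau t < tau s"
      using that \<open>\<not> s \<le> t\<close> s(1) unfolding records_def rl_min_pos_def by auto
    moreover have "tau s < tau t"
      using s_min[of t] that \<open>\<not> s \<le> t\<close> s(1) unfolding records_def rl_min_pos_def by auto
    ultimately show False
      by simp
  qed
  ultimately show ?thesis
    using s(1) finite_records by (intro Min_eqI[symmetric]) (auto simp: records_def)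
qed

lemma greedy_step_records:
  assumes "x \<in> records" "x \<noteq> n"
  shows "greedy_step tau n x = Min {t \<in> records. x < t}"
  using assms lr_min_pos_Int_rl_min_pos greedy_step_lr_min_pos greedy_step_rl_min_pos
  unfolding records_def by blast

lemma greedy_walk_eq_nth:
  assumes "k < card records"
  shows "greedy_walk tau n k = sorted_list_of_set records ! k"
  using funpow_Min_eq_nth_sorted_list_of_set[OF finite_records _ assms, of "greedy_step tau n"]
    greedy_step_records Min_records Max_records
  unfolding greedy_walk_def by simp

lemma sorted_list_of_set_records:
  "sorted_list_of_set records =
    sorted_list_of_set (lr_min_pos tau n) @ sorted_list_of_set {i \<in> rl_min_pos tau n. m < i}"
proof -
  have "records = lr_min_pos tau n \<union> {i \<in> rl_min_pos tau n. m < i}"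
    using lr_min_pos_Int_rl_min_pos rl_min_pos_ge unfolding records_def by fastforce
  moreover have "finite (lr_min_pos tau n)" "finite {i \<in> rl_min_pos tau n. m < i}"
    using finite_records unfolding records_def by auto
  then have "sorted_list_of_set (lr_min_pos tau n \<union> {i \<in> rl_min_pos tau n. m < i}) =
      sorted_list_of_set (lr_min_pos tau n) @ sorted_list_of_set {i \<in> rl_min_pos tau n. m < i}"
    by (intro sorted_list_of_set_Un_if_less) (auto dest: lr_min_pos_le)
  ultimately show ?thesis
    by simp
qed

lemma card_records_pos: "0 < card records"
  using finite_records n_in_records card_gt_0_iff by blast

lemma nth_last_sorted_records: "sorted_list_of_set records ! (card records - 1) = n"
  using sorted_list_of_set_nth_card_minus_one[OF finite_records] n_in_records Max_records
  by auto

lemma greedy_walk_reaches_n: "greedy_walk tau n (card records - 1) = n"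
  using greedy_walk_eq_nth[of "card records - 1"] nth_last_sorted_records card_records_pos
  by simp

lemma greedy_walk_less_n:
  assumes "k < card records - 1"
  shows "greedy_walk tau n k < n"
proof -
  let ?xs = "sorted_list_of_set records"
  have "?xs ! k < ?xs ! (card records - 1)"
    using assms card_records_pos
    by (intro sorted_wrt_nth_less[OF strict_sorted_list_of_set]) (simp_all add: finite_records)
  then show ?thesis
    using assms greedy_walk_eq_nth[of k] nth_last_sorted_records by simp
qed

lemma greedy_steps_eq: "greedy_steps tau n = card records - 1"
  unfolding greedy_steps_def
proof (rule Least_equality)
  show "greedy_walk tau n (card records - 1) = n"
    by (rule greedy_walk_reaches_n)
  fix k
  assume "greedy_walk tau n k = n"
  then show "card records - 1 \<le> k"
    using greedy_walk_less_n[of k] by (cases "k < card records - 1") simp_all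
qed

end

theorem theorem1:
  fixes n m :: nat and tau :: "nat \<Rightarrow> nat"
  assumes "n \<ge> 2"
    and "tau permutes {1..n}"
    and "m \<in> {1..n}" and "tau m = 1"
  shows "let path = sorted_list_of_set (lr_min_pos tau n)
                    @ sorted_list_of_set {i \<in> rl_min_pos tau n. m < i}
         in (\<forall>k < length path. greedy_walk tau n k = path ! k)
            \<and> greedy_steps tau n = length path - 1
            \<and> greedy_walk tau n (length path - 1) = n
            \<and> (\<forall>k < length path - 1. greedy_walk tau n k \<noteq> n)
            \<and> int (greedy_steps tau n) = int (L_num tau n) + int (R_num tau n) - 2"
proof -
  have inj: "inj_on tau {1..n}"
    using assms(2) by (rule permutes_inj_on)
  have "tau m < tau x" if "x \<in> {1..n}" "x \<noteq> m" for x
    using that assms(3,4) permutes_in_image[OF assms(2)] inj_on_eq_iff[OF inj]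
    by (metis atLeastAtMost_iff le_neq_implies_less)
  then interpret strict_min_position n m tau
    using inj assms(3) by unfold_locales
  show ?thesis
    unfolding sorted_list_of_set_records[symmetric] Let_def length_sorted_list_of_set
    using greedy_walk_eq_nth greedy_steps_eq greedy_walk_reaches_n greedy_walk_less_n
      card_records card_records_pos
    by (simp add: of_nat_diff less_imp_neq)
qed

end
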